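(* Let $\lambda\in(0,\infty)^E$ satisfy the triangle inequalities at every vertex: whenever $e,f,g$ are the three edges at a vertex, $\lambda(e)\le\lambda(f)+\lambda(g)$, $\lambda(f)\le\lambda(e)+\lambda(g)$ and $\lambda(g)\le\lambda(e)+\lambda(f)$. Let $\mu=\min_{e\in E}\lambda(e)$. Then $\rho<\frac{8V}{\mu}$.
   Context: $\Gamma$ is a finite trivalent graph with edge set $E$ and $V$ vertices. For $\lambda\in(0,\infty)^E$ define $$\rho=2\sum_{v}\Big(\frac{\lambda(e_v)}{\lambda(f_v)\lambda(g_v)}+\frac{\lambda(f_v)}{\lambda(e_v)\lambda(g_v)}+\frac{\lambda(g_v)}{\lambda(e_v)\lambda(f_v)}\Big),$$ where the sum is over the vertices $v$ and $e_v,f_v,g_v$ are the three edges at $v$. For an ideal triangulation dual graph, $\rho$ equals twice the sum of all simplicial coordinates, i.e. the sum of the $n$ puncture sums $\rho_i$. *)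

theory Defs
  imports Complex_Main
begin

text \<open>A finite trivalent (multi)graph: vertex set V, edge set E, and for each vertex v
  the (ordered) triple of edges at v.  Loops are allowed (an edge may occur twice in a
  triple).\<close>

definition occ :: "'e \<times> 'e \<times> 'e \<Rightarrow> 'e \<Rightarrow> nat" where
  "occ t e = (case t of (a, b, c) \<Rightarrow>
      (if a = e then 1 else 0) + (if b = e then 1 else 0) + (if c = e then 1 else 0))"

definition trivalent_graph :: "'v set \<Rightarrow> 'e set \<Rightarrow> ('v \<Rightarrow> 'e \<times> 'e \<times> 'e) \<Rightarrow> bool" where
  "trivalent_graph V E inc \<longleftrightarrow> finite V \<and> finite E \<and>
     (\<forall>v\<in>V. case inc v of (a, b, c) \<Rightarrow> a \<in> E \<and> b \<in> E \<and> c \<in> E) \<and>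
     (\<forall>e\<in>E. (\<Sum>v\<in>V. occ (inc v) e) = 2)"

definition vertex_term :: "('e \<Rightarrow> real) \<Rightarrow> 'e \<times> 'e \<times> 'e \<Rightarrow> real" where
  "vertex_term lam t = (case t of (e, f, g) \<Rightarrow>
      lam e / (lam f * lam g) + lam f / (lam e * lam g) + lam g / (lam e * lam f))"

definition rho :: "'v set \<Rightarrow> ('v \<Rightarrow> 'e \<times> 'e \<times> 'e) \<Rightarrow> ('e \<Rightarrow> real) \<Rightarrow> real" where
  "rho V inc lam = 2 * (\<Sum>v\<in>V. vertex_term lam (inc v))"

definition triangle_ineqs :: "('e \<Rightarrow> real) \<Rightarrow> 'e \<times> 'e \<times> 'e \<Rightarrow> bool" where
  "triangle_ineqs lam t = (case t of (e, f, g) \<Rightarrow>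
      lam e \<le> lam f + lam g \<and> lam f \<le> lam e + lam g \<and> lam g \<le> lam e + lam f)"

end

theory Submission
  imports Defs
begin

text \<open>If \<open>a\<close> is the largest of three side lengths \<open>a, b, c\<close> of a triangle, then
  \<open>a/(bc) \<le> (b + c)/(bc) = 1/b + 1/c\<close>, \<open>b/(ac) \<le> 1/c\<close> and \<open>c/(ab) \<le> 1/b\<close>, so each vertex
  contributes less than \<open>2/b + 2/c \<le> 4/\<mu>\<close> to \<open>\<rho>/2\<close>; the inequality is strict because
  \<open>a = b + c = 2a\<close> is impossible. Summing over the vertices gives \<open>\<rho> < 8V/\<mu>\<close>.\<close>

lemma triangle_sum_lt_of_largest:
  fixes a b c :: real
  assumes "0 < b" "0 < c" "b \<le> a" "c \<le> a" "a \<le> b + c"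
  shows "a/(b*c) + b/(a*c) + c/(a*b) < 2/b + 2/c"
proof -
  have pos: "0 < a" "0 < a*b" "0 < a*c" "0 < b*c" using assms by auto
  have first: "a/(b*c) \<le> 1/b + 1/c"
  proof -
    have "a/(b*c) \<le> (b + c)/(b*c)" using assms(5) pos(4) by (simp add: divide_right_mono)
    also have "\<dots> = 1/b + 1/c" using assms(1,2) by (simp add: field_simps)
    finally show ?thesis .
  qed
  have second: "b/(a*c) \<le> 1/c" and third: "c/(a*b) \<le> 1/b"
    using assms pos by (simp_all add: field_simps)
  consider "a < b + c" | "b < a" | "c < a"
    using assms(1,5) by linarith
  then show ?thesis
  proof cases
    case 1
    then have "a/(b*c) < 1/b + 1/c"
      using pos(4) assms(1,2) by (simp add: divide_strict_right_mono field_simps)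
    then show ?thesis using second third by linarith
  next
    case 2
    then have "b/(a*c) < 1/c" using pos assms(2) by (simp add: field_simps)
    then show ?thesis using first third by linarith
  next
    case 3
    then have "c/(a*b) < 1/b" using pos assms(1) by (simp add: field_simps)
    then show ?thesis using first second by linarith
  qed
qed

lemma triangle_sum_lt:
  fixes a b c m :: real
  assumes "a \<le> b + c" "b \<le> a + c" "c \<le> a + b"
    and "0 < m" "m \<le> a" "m \<le> b" "m \<le> c"
  shows "a/(b*c) + b/(a*c) + c/(a*b) < 4/m"
proof -
  have recip: "2/x \<le> 2/m" if "m \<le> x" for x
    using that assms(4) by (simp add: frac_le)
  consider "b \<le> a" "c \<le> a" | "a \<le> b" "c \<le> b" | "a \<le> c" "b \<le> c" by linarith
  then show ?thesis
  proof cases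
    case 1
    then have "a/(b*c) + b/(a*c) + c/(a*b) < 2/b + 2/c"
      using assms by (intro triangle_sum_lt_of_largest) auto
    then show ?thesis using recip[OF assms(6)] recip[OF assms(7)] by simp
  next
    case 2
    then have "b/(a*c) + a/(b*c) + c/(b*a) < 2/a + 2/c"
      using assms by (intro triangle_sum_lt_of_largest) auto
    then show ?thesis using recip[OF assms(5)] recip[OF assms(7)] by (simp add: ac_simps)
  next
    case 3
    then have "c/(a*b) + a/(c*b) + b/(c*a) < 2/a + 2/b"
      using assms by (intro triangle_sum_lt_of_largest) auto
    then show ?thesis using recip[OF assms(5)] recip[OF assms(6)] by (simp add: ac_simps)
  qed
qed

lemma vertex_term_lt:
  assumes "triangle_ineqs lam (e, f, g)"
    and "0 < m" "m \<le> lam e" "m \<le> lam f" "m \<le> lam g"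
  shows "vertex_term lam (e, f, g) < 4/m"
  using triangle_sum_lt[of "lam e" "lam f" "lam g" m] assms
  by (simp add: triangle_ineqs_def vertex_term_def)

lemma rho_lt_of_vertex_term_lt:
  assumes "finite V" "V \<noteq> {}" "\<And>v. v \<in> V \<Longrightarrow> vertex_term lam (inc v) < B"
  shows "rho V inc lam < 2 * real (card V) * B"
proof -
  have "(\<Sum>v\<in>V. vertex_term lam (inc v)) < (\<Sum>v\<in>V. B)"
    using sum_strict_mono[OF assms] .
  then show ?thesis by (simp add: rho_def)
qed

lemma trivalent_graph_edges_in:
  assumes "trivalent_graph V E inc" "v \<in> V" "inc v = (e, f, g)"
  shows "e \<in> E" "f \<in> E" "g \<in> E"
  using assms unfolding trivalent_graph_def by (metis case_prod_conv)+

theorem mainTheorem5: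
  fixes V :: "'v set" and E :: "'e set" and inc :: "'v \<Rightarrow> 'e \<times> 'e \<times> 'e"
    and lam :: "'e \<Rightarrow> real"
  assumes "trivalent_graph V E inc"
    and "V \<noteq> {}"
    and "\<forall>e\<in>E. lam e > 0"
    and "\<forall>v\<in>V. triangle_ineqs lam (inc v)"
  shows "rho V inc lam < 8 * real (card V) / Min (lam ` E)"
proof -
  define \<mu> where "\<mu> = Min (lam ` E)"
  have fin: "finite V" "finite E" using assms(1) by (simp_all add: trivalent_graph_def)
  obtain v0 where "v0 \<in> V" using assms(2) by blast
  then have "E \<noteq> {}"
    using trivalent_graph_edges_in(1)[OF assms(1)] by (metis prod_cases3 empty_iff)
  then have "\<mu> \<in> lam ` E" unfolding \<mu>_def using fin(2) by (intro Min_in) auto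
  then have \<mu>_pos: "0 < \<mu>" using assms(3) by auto
  have \<mu>_le: "\<mu> \<le> lam e" if "e \<in> E" for e
    unfolding \<mu>_def using fin(2) that by simp
  have "vertex_term lam (inc v) < 4/\<mu>" if "v \<in> V" for v
  proof (cases "inc v")
    case (fields e f g)
    then have "e \<in> E" "f \<in> E" "g \<in> E"
      using trivalent_graph_edges_in[OF assms(1) that] by auto
    then show ?thesis
      using assms(4) that fields \<mu>_pos \<mu>_le by (metis vertex_term_lt)
  qed
  then have "rho V inc lam < 2 * real (card V) * (4/\<mu>)"
    using rho_lt_of_vertex_term_lt[OF fin(1) assms(2)] by blast
  then show ?thesis by (simp add: \<mu>_def)
qed

end
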